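(* Consider the binary model with unknown prior $\mu^*\in(0,1)$ and unknown bias $\alpha^*$, known cutoff $\hat q$ with $0<\mu^*<\hat q<1$, and assume $\alpha^*\ge\frac{\hat q-\mu^*}{1-\mu^*}$, so that $m^*\in[0,1]$. Then for every $T\ge4$, the policy SEJ satisfies $$\mathrm{Reg}_T\le\Big(\frac{1-\mu^*}{\mu^*}+1\Big)\big(2+\lceil\log_2\log_2T\rceil\big)+1=O(\log\log T).$$
   Context: Binary model: $\Omega=A=\{0,1\}$, sender utility $u_S(a,\omega)=\mathbf 1\{a=1\}$. Both the prior $\mu^*=\Pr(\omega=1)$ and the bias $\alpha^*\in(0,1]$ are fixed across rounds and unknown to the sender. After a signal with Bayesian posterior $\nu=\Pr(\omega=1\mid s)$, the receiver takes action $1$ iff $(1-\alpha^* )\mu^*+\alpha^*\nu\ge\hat q$ (ties in favor of action $1$). Signaling family. For $m\in[0,1]$, the scheme $\pi_m$ sends signal High with probability $1$ in state $1$ and with probability $m$ in state $0$, and sends Low otherwise. Define $m^*$ as the solution of $$(1-\alpha^* )\mu^*+\alpha^*\frac{\mu^*}{\mu^*+(1-\mu^* )m^*}=\hat q,$$ so that High under $\pi_m$ induces action $1$ iff $m\le m^*$. Benchmark and regret. The full-information benchmark value per round is $V^*=\mu^*+(1-\mu^* )m^*$, the optimal probability of inducing action $1$ when $(\mu^*,\alpha^* )$ are known. The regret is $\mathrm{Reg}_T=TV^*-\sum_t\mathbb E[\Pr(\text{action }1\text{ in round }t\mid\text{history})]$. Policy SEJ. Initialize $[a,b]=[0,1]$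 and $\varepsilon=1/2$. While $b-a>1/T$ and rounds remain, run a phase: 1. Set $m=m_{\rm prev}=a$. 2. While $m\le b$ and rounds remain, play $\pi_m$ for one round. If the signal is Low, continue. If the signal is High and the receiver takes action $1$, set $m_{\rm prev}\gets m$ and $m\gets m+\varepsilon$. If the signal is High and the receiver takes action $0$, set $[a,b]\gets[m_{\rm prev},m]$, $\varepsilon\gets\varepsilon^2$, and end the phase. 3. If the inner loop ended because $m>b$, set $[a,b]\gets[m_{\rm prev},b]$ and $\varepsilon\gets\varepsilon^2$. Then play $\pi_a$ in all remaining rounds. *)

theory Defs
  imports Complex_Main
begin

(* Binary persuasion model: prior mu = Pr(omega = 1), bias alpha, cutoff q (= q-hat). *)

definition acts1 :: "real \<Rightarrow> real \<Rightarrow> real \<Rightarrow> real \<Rightarrow> bool" where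
  "acts1 mu alpha q nu \<longleftrightarrow> (1 - alpha) * mu + alpha * nu \<ge> q"

definition pHigh :: "real \<Rightarrow> real \<Rightarrow> real" where
  "pHigh mu m = mu + (1 - mu) * m"

definition postHigh :: "real \<Rightarrow> real \<Rightarrow> real" where
  "postHigh mu m = mu / (mu + (1 - mu) * m)"

definition postLow :: real where
  "postLow = 0"

definition prob_act1 :: "real \<Rightarrow> real \<Rightarrow> real \<Rightarrow> real \<Rightarrow> real" where
  "prob_act1 mu alpha q m =
     pHigh mu m * (if acts1 mu alpha q (postHigh mu m) then 1 else 0)
   + (1 - pHigh mu m) * (if acts1 mu alpha q postLow then 1 else 0)"

definition mstar :: "real \<Rightarrow> real \<Rightarrow> real \<Rightarrow> real" where
  "mstar mu alpha q = (THE m. (1 - alpha) * mu + alpha * (mu / (mu + (1 - mu) * m)) = q)"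

(* full-information benchmark per round *)
definition Vstar :: "real \<Rightarrow> real \<Rightarrow> real \<Rightarrow> real" where
  "Vstar mu alpha q = mu + (1 - mu) * mstar mu alpha q"

(* State of policy SEJ. Explore: inside a phase, next round plays pi_m.
   Exploit: outer loop finished, plays pi_a forever. *)
datatype mode = Explore | Exploit

record sej_state =
  st_mode :: mode
  st_a :: real
  st_b :: real
  st_eps :: real
  st_m :: real
  st_mprev :: real

definition sej_outer :: "nat \<Rightarrow> real \<Rightarrow> real \<Rightarrow> real \<Rightarrow> sej_state" where
  "sej_outer T a b e =
     \<lparr> st_mode = (if b - a > 1 / real T then Explore else Exploit),
       st_a = a, st_b = b, st_eps = e, st_m = a, st_mprev = a \<rparr>"

definition sej_init :: "nat \<Rightarrow> sej_state" where
  "sej_init T = sej_outer T 0 1 (1/2)"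

definition sej_played :: "sej_state \<Rightarrow> real" where
  "sej_played s = (if st_mode s = Explore then st_m s else st_a s)"

definition sej_next_high :: "nat \<Rightarrow> bool \<Rightarrow> sej_state \<Rightarrow> sej_state" where
  "sej_next_high T act s =
     (if st_mode s = Exploit then s
      else if act then
        (let m' = st_m s + st_eps s in
         if m' \<le> st_b s then s\<lparr> st_mprev := st_m s, st_m := m' \<rparr>
         else sej_outer T (st_m s) (st_b s) ((st_eps s)\<^sup>2))
      else sej_outer T (st_mprev s) (st_m s) ((st_eps s)\<^sup>2))"

(* A Low signal does not change the state. *)

(* Expected total number of rounds with action 1 (= sum over rounds of
   E[Pr(action 1 in round t | history)]) over the next n rounds, from state s. *)
fun sej_value :: "real \<Rightarrow> real \<Rightarrow> real \<Rightarrow> nat \<Rightarrow> nat \<Rightarrow> sej_state \<Rightarrow> real" where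
  "sej_value mu alpha q T 0 s = 0"
| "sej_value mu alpha q T (Suc n) s =
     (let m = sej_played s; p = pHigh mu m in
        prob_act1 mu alpha q m
      + p * sej_value mu alpha q T n (sej_next_high T (acts1 mu alpha q (postHigh mu m)) s)
      + (1 - p) * sej_value mu alpha q T n s)"

definition sej_regret :: "real \<Rightarrow> real \<Rightarrow> real \<Rightarrow> nat \<Rightarrow> real" where
  "sej_regret mu alpha q T = real T * Vstar mu alpha q - sej_value mu alpha q T T (sej_init T)"

end

theory Submission
  imports Defs
begin

(* Amortised analysis. Playing pi_m with 0 <= m loses (1 - mu) (m* - m) if m <= m* and at
   most Pr(High) otherwise, and the state of SEJ changes only after a High signal, which has
   probability p >= mu. So it suffices to find a potential Phi >= 0 that drops by
   ((1 - mu) / mu) (m* - m) after an accepted High signal and by 1 after a rejected one,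
   since in the final exploitation the loss per round is at most (1 - mu) / T.
   Within a phase of step e the gaps m* - m of accepted signals decrease by e, so their sum
   is at most Q (m* - m, e) with Q (d, e) = d (d + e) / (2 e) + e / 8; a phase starts at
   distance at most sqrt e from m*, where Q <= 1. The steps are e_k = 2^(-2^k), so a phase
   of index k starts only while k <= ceil (log2 (log2 T)), and
   Phi = ((1 - mu) / mu) Q + 1 + ((1 - mu) / mu + 1) (ceil (log2 (log2 T)) - k). *)

(* Bounds the sum of the positive terms of d + (d - e) + (d - 2 e) + ...; the summand e / 8
   makes it dominate the single gap d as well. *)
definition walk_cost :: "real \<Rightarrow> real \<Rightarrow> real" where
  "walk_cost d e = (if 0 \<le> d then d * (d + e) / (2 * e) + e / 8 else 0)"

lemma walk_cost_nonneg: "0 < e \<Longrightarrow> 0 \<le> walk_cost d e"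
  unfolding walk_cost_def by auto

lemma walk_cost_ge_gap:
  assumes "0 < e" "0 \<le> d"
  shows "d \<le> walk_cost d e"
proof -
  have "walk_cost d e - d = (d - e / 2)\<^sup>2 / (2 * e)"
    using assms by (simp add: walk_cost_def field_simps power2_eq_square)
  also have "\<dots> \<ge> 0" using assms by simp
  finally show ?thesis by simp
qed

lemma walk_cost_step:
  assumes "0 < e" "0 \<le> d"
  shows "d \<le> walk_cost d e - walk_cost (d - e) e"
proof (cases "0 \<le> d - e")
  case True
  then show ?thesis using assms by (simp add: walk_cost_def field_simps)
next
  case False
  then show ?thesis using walk_cost_ge_gap[OF assms] by (simp add: walk_cost_def)
qed

lemma walk_cost_le_1:
  assumes "0 < e" "e \<le> 1/2" "0 \<le> d" "d \<le> e"
  shows "walk_cost d (e\<^sup>2) \<le> 1"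
proof -
  have "walk_cost d (e\<^sup>2) = d * (d + e\<^sup>2) / (2 * e\<^sup>2) + e\<^sup>2 / 8"
    using assms by (simp add: walk_cost_def)
  also have "\<dots> \<le> e * (e + e\<^sup>2) / (2 * e\<^sup>2) + 1 / 8"
    using assms by (intro add_mono divide_right_mono mult_mono) (auto simp: power_le_one)
  also have "\<dots> = (1 + e) / 2 + 1 / 8"
    using assms by (simp add: field_simps power2_eq_square)
  also have "\<dots> \<le> 1"
    using assms by (simp add: field_simps)
  finally show ?thesis .
qed

definition accuracy :: "nat \<Rightarrow> real" where
  "accuracy k = (1/2) ^ (2 ^ k)"

lemma accuracy_0: "accuracy 0 = 1/2"
  by (simp add: accuracy_def)

lemma accuracy_Suc: "accuracy (Suc k) = (accuracy k)\<^sup>2"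
  by (simp add: accuracy_def power_mult[symmetric] mult.commute)

lemma accuracy_pos: "0 < accuracy k"
  by (simp add: accuracy_def)

lemma accuracy_le_half: "accuracy k \<le> 1/2"
  using power_decreasing[of 1 "2 ^ k" "1/2 :: real"] by (simp add: accuracy_def)

lemma log_log_inverse_accuracy: "log 2 (log 2 (1 / accuracy k)) = real k"
  by (simp add: accuracy_def power_one_over log_nat_power)

lemma index_bound_if_accuracy_gt_inverse:
  assumes "1 / t < accuracy k" "0 < t"
  shows "real k + 1 \<le> real_of_int \<lceil>log 2 (log 2 t)\<rceil>"
proof -
  have "(2::real) ^ (2 ^ k) < t"
    using assms by (simp add: accuracy_def power_one_over divide_less_eq field_simps)
  then have "log 2 ((2::real) ^ (2 ^ k)) < log 2 t"
    using assms(2) by (subst log_less_cancel_iff) auto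
  then have "log 2 ((2::real) ^ k) < log 2 (log 2 t)"
    by (subst log_less_cancel_iff) (auto intro: order.strict_trans[of 0 "2 ^ k"])
  then have "real k < log 2 (log 2 t)" by simp
  then have "int k + 1 \<le> \<lceil>log 2 (log 2 t)\<rceil>"
    by (metis add1_zle_eq less_ceiling_iff of_int_of_nat_eq)
  then show ?thesis by linarith
qed

locale binary_persuasion =
  fixes mu alpha q :: real
  assumes mu_pos: "0 < mu" and mu_less_q: "mu < q" and q_less_1: "q < 1"
    and alpha_pos: "0 < alpha" and alpha_ge: "(q - mu) / (1 - mu) \<le> alpha"
begin

definition threshold :: real where
  "threshold = (q - (1 - alpha) * mu) / alpha"

abbreviation m_star :: real where
  "m_star \<equiv> mstar mu alpha q"

lemma mu_less_1: "mu < 1"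
  using mu_less_q q_less_1 by linarith

lemma acts1_iff_threshold: "acts1 mu alpha q nu \<longleftrightarrow> threshold \<le> nu"
  using alpha_pos by (simp add: acts1_def threshold_def divide_le_eq algebra_simps)

lemma mu_less_threshold: "mu < threshold"
  using alpha_pos mu_less_q by (simp add: threshold_def less_divide_eq algebra_simps)

lemma threshold_le_1: "threshold \<le> 1"
proof -
  have "q - mu \<le> alpha * (1 - mu)"
    using alpha_ge mu_less_1 by (simp add: pos_divide_le_eq)
  then show ?thesis
    using alpha_pos by (simp add: threshold_def divide_le_eq algebra_simps)
qed

lemma mstar_eq: "m_star = (mu / threshold - mu) / (1 - mu)"
proof -
  have threshold_pos: "0 < threshold"
    using mu_pos mu_less_threshold by linarith
  have "(1 - alpha) * mu + alpha * (mu / (mu + (1 - mu) * m)) = q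
          \<longleftrightarrow> m = (mu / threshold - mu) / (1 - mu)" for m
  proof -
    have "(1 - alpha) * mu + alpha * (mu / (mu + (1 - mu) * m)) = q
            \<longleftrightarrow> mu / (mu + (1 - mu) * m) = threshold"
      using alpha_pos by (auto simp: threshold_def field_simps)
    also have "\<dots> \<longleftrightarrow> mu + (1 - mu) * m = mu / threshold"
      using threshold_pos mu_pos by (cases "mu + (1 - mu) * m = 0") (auto simp: field_simps)
    also have "\<dots> \<longleftrightarrow> m = (mu / threshold - mu) / (1 - mu)"
      using mu_less_1 by (auto simp: field_simps)
    finally show ?thesis .
  qed
  then show ?thesis
    by (simp add: mstar_def)
qed

lemma mstar_nonneg: "0 \<le> m_star"
  using mu_pos mu_less_threshold threshold_le_1 mu_less_1
  by (simp add: mstar_eq le_divide_eq)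

lemma mstar_le_1: "m_star \<le> 1"
  using mu_pos mu_less_threshold mu_less_1
  by (simp add: mstar_eq divide_le_eq)

lemma acts1_postHigh_iff:
  assumes "0 \<le> m"
  shows "acts1 mu alpha q (postHigh mu m) \<longleftrightarrow> m \<le> m_star"
proof -
  have "0 < pHigh mu m"
    using assms mu_pos mu_less_1 by (simp add: pHigh_def add_pos_nonneg)
  moreover have "0 < threshold"
    using mu_pos mu_less_threshold by linarith
  ultimately have "acts1 mu alpha q (postHigh mu m) \<longleftrightarrow> pHigh mu m \<le> mu / threshold"
    by (simp add: acts1_iff_threshold postHigh_def flip: pHigh_def)
       (simp add: le_divide_eq divide_le_eq mult.commute)
  also have "\<dots> \<longleftrightarrow> m \<le> m_star"
    using mu_less_1 by (simp add: pHigh_def mstar_eq le_divide_eq algebra_simps)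
  finally show ?thesis .
qed

lemma not_acts1_postLow: "\<not> acts1 mu alpha q postLow"
  using mu_pos mu_less_threshold by (simp add: acts1_iff_threshold postLow_def)

lemma prob_act1_eq:
  "0 \<le> m \<Longrightarrow> prob_act1 mu alpha q m = (if m \<le> m_star then pHigh mu m else 0)"
  by (simp add: prob_act1_def acts1_postHigh_iff not_acts1_postLow)

lemma pHigh_bounds:
  assumes "0 \<le> m" "m \<le> 1"
  shows "mu \<le> pHigh mu m \<and> pHigh mu m \<le> 1"
proof -
  have "0 \<le> (1 - mu) * m" "(1 - mu) * m \<le> 1 - mu"
    using assms mu_less_1 by (auto intro: mult_left_le)
  then show ?thesis by (simp add: pHigh_def)
qed

end

locale sej_analysis = binary_persuasion +
  fixes T :: nat
  assumes T_ge_2: "2 \<le> T"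
begin

definition gap_weight :: real where
  "gap_weight = (1 - mu) / mu"

definition phase_budget :: real where
  "phase_budget = real_of_int \<lceil>log 2 (log 2 (real T))\<rceil>"

abbreviation next_state :: "sej_state \<Rightarrow> sej_state" where
  "next_state s \<equiv> sej_next_high T (acts1 mu alpha q (postHigh mu (sej_played s))) s"

definition sej_inv :: "sej_state \<Rightarrow> bool" where
  "sej_inv s \<longleftrightarrow> (if st_mode s = Explore then
       0 \<le> st_mprev s \<and> st_mprev s \<le> m_star \<and> st_mprev s \<le> st_m s
     \<and> st_m s \<le> st_mprev s + st_eps s \<and> st_m s \<le> st_b s
     \<and> m_star \<le> st_b s \<and> st_b s \<le> 1
     \<and> (\<exists>k. st_eps s = accuracy k \<and> real k \<le> phase_budget)
   else 0 \<le> st_a s \<and> st_a s \<le> m_star \<and> m_star - st_a s \<le> 1 / real T)"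

definition sej_potential :: "sej_state \<Rightarrow> real" where
  "sej_potential s = (if st_mode s = Explore then
       gap_weight * walk_cost (m_star - st_m s) (st_eps s) + 1
     + (gap_weight + 1) * (phase_budget - log 2 (log 2 (1 / st_eps s)))
   else 0)"

lemma gap_weight_nonneg: "0 \<le> gap_weight"
  using mu_pos mu_less_1 by (simp add: gap_weight_def)

lemma gap_weight_compensates: "mu \<le> p \<Longrightarrow> 1 - mu \<le> p * gap_weight"
  using mu_pos mu_less_1 mult_right_mono[of mu p "(1 - mu) / mu"] by (simp add: gap_weight_def)

lemma phase_budget_nonneg: "0 \<le> phase_budget"
proof -
  have "1 \<le> log 2 (real T)"
    using T_ge_2 by simp
  then have "0 \<le> log 2 (log 2 (real T))"
    by simp
  then show ?thesis
    unfolding phase_budget_def by linarith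
qed

lemma explore_state:
  assumes "sej_inv s" "st_mode s = Explore"
  obtains k where "st_eps s = accuracy k" "real k \<le> phase_budget"
    "sej_potential s = gap_weight * walk_cost (m_star - st_m s) (accuracy k) + 1
                         + (gap_weight + 1) * (phase_budget - real k)"
  using assms by (auto simp: sej_inv_def sej_potential_def log_log_inverse_accuracy)

lemma sej_potential_nonneg:
  assumes "sej_inv s"
  shows "0 \<le> sej_potential s"
proof (cases "st_mode s")
  case Explore
  with assms obtain k where "real k \<le> phase_budget" and
    "sej_potential s = gap_weight * walk_cost (m_star - st_m s) (accuracy k) + 1
                         + (gap_weight + 1) * (phase_budget - real k)"
    by (rule explore_state)
  then show ?thesis
    using gap_weight_nonneg walk_cost_nonneg[OF accuracy_pos] by simp
next
  case Exploit
  then show ?thesis by (simp add: sej_potential_def)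
qed

lemma sej_played_bounds: "sej_inv s \<Longrightarrow> 0 \<le> sej_played s \<and> sej_played s \<le> 1"
  using mstar_le_1 by (auto simp: sej_inv_def sej_played_def split: if_splits)

lemma sej_outer_inv_potential:
  assumes "0 \<le> a" "a \<le> m_star" "m_star \<le> b" "b \<le> 1" "b - a \<le> accuracy k"
    and "real k \<le> phase_budget"
  shows "sej_inv (sej_outer T a b ((accuracy k)\<^sup>2))
    \<and> sej_potential (sej_outer T a b ((accuracy k)\<^sup>2))
          \<le> (gap_weight + 1) * (phase_budget - real k)"
proof (cases "1 / real T < b - a")
  case True
  then have "real (Suc k) \<le> phase_budget"
    using index_bound_if_accuracy_gt_inverse[of "real T" k] assms(5) T_ge_2
    by (simp add: phase_budget_def)
  moreover have "walk_cost (m_star - a) ((accuracy k)\<^sup>2) \<le> 1"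
    using assms accuracy_pos accuracy_le_half by (intro walk_cost_le_1) auto
  ultimately show ?thesis
    using True assms gap_weight_nonneg accuracy_pos[of "Suc k"]
    by (auto simp: sej_inv_def sej_potential_def sej_outer_def accuracy_Suc[symmetric]
        log_log_inverse_accuracy algebra_simps mult_left_le intro!: exI[of _ "Suc k"])
next
  case False
  then show ?thesis
    using assms gap_weight_nonneg by (auto simp: sej_inv_def sej_potential_def sej_outer_def)
qed

lemma explore_accept_step:
  assumes inv: "sej_inv s" and explore: "st_mode s = Explore" and accept: "st_m s \<le> m_star"
  shows "sej_inv (next_state s)
    \<and> gap_weight * (m_star - st_m s) \<le> sej_potential s - sej_potential (next_state s)"
proof -
  obtain k where k: "st_eps s = accuracy k" "real k \<le> phase_budget"
    and pot: "sej_potential s = gap_weight * walk_cost (m_star - st_m s) (accuracy k) + 1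
                                  + (gap_weight + 1) * (phase_budget - real k)"
    using inv explore by (rule explore_state)
  define m e where "m = st_m s" and "e = accuracy k"
  have "0 < e"
    by (simp add: e_def accuracy_pos)
  have inv_s: "0 \<le> st_mprev s" "st_mprev s \<le> m" "m \<le> st_mprev s + e" "st_b s \<le> 1"
    using inv explore k by (auto simp: sej_inv_def m_def e_def)
  then have "acts1 mu alpha q (postHigh mu m)"
    using acts1_postHigh_iff accept by (simp add: m_def)
  then have succ: "next_state s = (if m + e \<le> st_b s then s\<lparr>st_mprev := m, st_m := m + e\<rparr>
                                    else sej_outer T m (st_b s) (e\<^sup>2))"
    using explore k by (simp add: sej_next_high_def sej_played_def m_def e_def Let_def)
  show ?thesis
  proof (cases "m + e \<le> st_b s")
    case True
    have "sej_inv (next_state s)"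
      using inv explore accept True k by (auto simp: succ sej_inv_def m_def e_def)
    moreover have "sej_potential (next_state s) = gap_weight * walk_cost (m_star - m - e) e + 1
                                                   + (gap_weight + 1) * (phase_budget - real k)"
      using explore k True
      by (simp add: succ sej_potential_def log_log_inverse_accuracy m_def e_def diff_diff_eq)
    moreover have "m_star - m \<le> walk_cost (m_star - m) e - walk_cost (m_star - m - e) e"
      using walk_cost_step \<open>0 < e\<close> accept by (simp add: m_def)
    ultimately show ?thesis
      using pot gap_weight_nonneg mult_left_mono
      by (fastforce simp: m_def e_def right_diff_distrib[symmetric])
  next
    case False
    have restart: "next_state s = sej_outer T m (st_b s) ((accuracy k)\<^sup>2)"
      using succ False by (simp add: e_def)
    have "sej_inv (next_state s)
      \<and> sej_potential (next_state s) \<le> (gap_weight + 1) * (phase_budget - real k)"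
      unfolding restart using inv explore accept False k inv_s
      by (intro sej_outer_inv_potential) (auto simp: sej_inv_def m_def e_def)
    moreover have "m_star - m \<le> walk_cost (m_star - m) e"
      using walk_cost_ge_gap \<open>0 < e\<close> accept by (simp add: m_def)
    ultimately show ?thesis
      using pot gap_weight_nonneg mult_left_mono by (fastforce simp: m_def e_def)
  qed
qed

lemma explore_reject_step:
  assumes inv: "sej_inv s" and explore: "st_mode s = Explore" and reject: "m_star < st_m s"
  shows "sej_inv (next_state s) \<and> 1 \<le> sej_potential s - sej_potential (next_state s)"
proof -
  obtain k where k: "st_eps s = accuracy k" "real k \<le> phase_budget"
    and pot: "sej_potential s = gap_weight * walk_cost (m_star - st_m s) (accuracy k) + 1
                                  + (gap_weight + 1) * (phase_budget - real k)"
    using inv explore by (rule explore_state)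
  have inv_s: "0 \<le> st_mprev s" "st_mprev s \<le> m_star" "st_m s \<le> st_mprev s + accuracy k"
    "st_m s \<le> 1"
    using inv explore k by (auto simp: sej_inv_def)
  then have "\<not> acts1 mu alpha q (postHigh mu (st_m s))"
    using acts1_postHigh_iff reject by simp
  then have succ: "next_state s = sej_outer T (st_mprev s) (st_m s) ((accuracy k)\<^sup>2)"
    using explore k by (simp add: sej_next_high_def sej_played_def)
  have "sej_inv (next_state s)
    \<and> sej_potential (next_state s) \<le> (gap_weight + 1) * (phase_budget - real k)"
    unfolding succ using inv_s reject k by (intro sej_outer_inv_potential) auto
  moreover have "walk_cost (m_star - st_m s) (accuracy k) = 0"
    using reject by (simp add: walk_cost_def)
  ultimately show ?thesis
    using pot by simp
qed

lemma round_loss_le: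
  assumes inv: "sej_inv s"
  shows "sej_inv (next_state s)
    \<and> pHigh mu m_star - prob_act1 mu alpha q (sej_played s)
        \<le> pHigh mu (sej_played s) * (sej_potential s - sej_potential (next_state s))
          + (1 - mu) / real T"
proof -
  define m p where "m = sej_played s" and "p = pHigh mu m"
  have m: "0 \<le> m" "m \<le> 1"
    using sej_played_bounds[OF inv] by (simp_all add: m_def)
  then have p: "mu \<le> p" "p \<le> 1"
    using pHigh_bounds by (simp_all add: p_def)
  have slack: "0 \<le> (1 - mu) / real T"
    using mu_less_1 by simp
  show ?thesis
  proof (cases "st_mode s")
    case Explore
    then have m_eq: "m = st_m s"
      by (simp add: m_def sej_played_def)
    show ?thesis
    proof (cases "m \<le> m_star")
      case True
      have "pHigh mu m_star - prob_act1 mu alpha q m = (1 - mu) * (m_star - m)"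
        using m True by (simp add: prob_act1_eq pHigh_def algebra_simps)
      also have "\<dots> \<le> p * gap_weight * (m_star - m)"
        using gap_weight_compensates[OF p(1)] True by (intro mult_right_mono) auto
      also have "\<dots> \<le> p * (sej_potential s - sej_potential (next_state s))"
        using explore_accept_step[OF inv Explore] True p mu_pos
        by (simp add: m_eq mult.assoc mult_left_mono)
      finally show ?thesis
        using explore_accept_step[OF inv Explore] True slack
        by (simp add: m_eq p_def m_def[symmetric])
    next
      case False
      have "pHigh mu m_star - prob_act1 mu alpha q m = pHigh mu m_star"
        using m False by (simp add: prob_act1_eq)
      also have "\<dots> \<le> p"
        using False mu_less_1 by (simp add: p_def pHigh_def)
      also have "\<dots> \<le> p * (sej_potential s - sej_potential (next_state s))"
        using explore_reject_step[OF inv Explore] False p mu_pos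
        by (simp add: m_eq mult_le_cancel_left1)
      finally show ?thesis
        using explore_reject_step[OF inv Explore] False slack
        by (simp add: m_eq p_def m_def[symmetric])
    qed
  next
    case Exploit
    then have "next_state s = s" "m = st_a s"
      by (simp_all add: sej_next_high_def m_def sej_played_def)
    moreover have "(1 - mu) * (m_star - st_a s) \<le> (1 - mu) * (1 / real T)"
      using inv Exploit mu_less_1 by (intro mult_left_mono) (auto simp: sej_inv_def)
    ultimately show ?thesis
      using inv Exploit m by (auto simp: prob_act1_eq pHigh_def sej_inv_def m_def algebra_simps)
  qed
qed

lemma regret_to_go_le:
  "sej_inv s \<Longrightarrow> real n * pHigh mu m_star - sej_value mu alpha q T n s
                    \<le> sej_potential s + real n * ((1 - mu) / real T)"
proof (induction n arbitrary: s)
  case 0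
  then show ?case
    using sej_potential_nonneg by simp
next
  case (Suc n)
  define m p where "m = sej_played s" and "p = pHigh mu m"
  define loss where "loss n s = real n * pHigh mu m_star - sej_value mu alpha q T n s" for n s
  have step: "sej_inv (next_state s)"
    "pHigh mu m_star - prob_act1 mu alpha q m
       \<le> p * (sej_potential s - sej_potential (next_state s)) + (1 - mu) / real T"
    using round_loss_le[OF Suc.prems] by (simp_all add: m_def p_def)
  have "0 \<le> p" "p \<le> 1"
    using pHigh_bounds sej_played_bounds[OF Suc.prems] mu_pos by (fastforce simp: p_def m_def)+
  have "loss (Suc n) s = (pHigh mu m_star - prob_act1 mu alpha q m)
                          + p * loss n (next_state s) + (1 - p) * loss n s"
    by (simp add: loss_def m_def p_def Let_def algebra_simps)
  also have "\<dots> \<le> (p * (sej_potential s - sej_potential (next_state s)) + (1 - mu) / real T)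
      + p * (sej_potential (next_state s) + real n * ((1 - mu) / real T))
      + (1 - p) * (sej_potential s + real n * ((1 - mu) / real T))"
    using step Suc.IH Suc.prems \<open>0 \<le> p\<close> \<open>p \<le> 1\<close>
    by (intro add_mono mult_left_mono) (auto simp: loss_def)
  also have "\<dots> = sej_potential s + real (Suc n) * ((1 - mu) / real T)"
    by (simp add: algebra_simps add_divide_distrib[symmetric] diff_divide_distrib[symmetric])
  finally show ?case
    by (simp add: loss_def)
qed

lemma sej_inv_init: "sej_inv (sej_init T)"
  using T_ge_2 mstar_nonneg mstar_le_1 phase_budget_nonneg accuracy_0
  by (auto simp: sej_init_def sej_outer_def sej_inv_def intro!: exI[of _ 0])

lemma sej_potential_init:
  "sej_potential (sej_init T) \<le> (gap_weight + 1) * (2 + phase_budget) - 1"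
proof -
  have "walk_cost m_star (1/2) = m_star * (m_star + 1/2) + 1/16"
    using mstar_nonneg by (simp add: walk_cost_def)
  also have "\<dots> \<le> 2"
    using mstar_nonneg mstar_le_1 mult_mono[of m_star 1 "m_star + 1/2" "3/2"] by simp
  finally have "gap_weight * walk_cost m_star (1/2) \<le> gap_weight * 2"
    using gap_weight_nonneg by (simp add: mult_left_mono)
  then show ?thesis
    using T_ge_2 log_log_inverse_accuracy[of 0]
    by (simp add: sej_init_def sej_outer_def sej_potential_def accuracy_0 algebra_simps)
qed

theorem sej_regret_le:
  "sej_regret mu alpha q T
     \<le> ((1 - mu) / mu + 1) * (2 + real_of_int \<lceil>log 2 (log 2 (real T))\<rceil>) + 1"
proof -
  have "sej_regret mu alpha q T \<le> sej_potential (sej_init T) + (1 - mu)"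
    using regret_to_go_le[OF sej_inv_init, of T] T_ge_2
    by (simp add: sej_regret_def Vstar_def pHigh_def)
  also have "\<dots> \<le> (gap_weight + 1) * (2 + phase_budget) + 1"
    using sej_potential_init mu_pos by linarith
  finally show ?thesis
    by (simp add: gap_weight_def phase_budget_def)
qed

end

theorem propositionF1:
  fixes mu alpha q :: real and T :: nat
  assumes "0 < mu" "mu < q" "q < 1"
    and "0 < alpha" "alpha \<le> 1"
    and "alpha \<ge> (q - mu) / (1 - mu)"
    and "T \<ge> 4"
  shows "sej_regret mu alpha q T
           \<le> ((1 - mu) / mu + 1) * (2 + real_of_int \<lceil>log 2 (log 2 (real T))\<rceil>) + 1"
proof -
  interpret sej_analysis mu alpha q T
    using assms by unfold_locales auto
  show ?thesis
    by (rule sej_regret_le)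
qed

end
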